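(* Let $C_g$ and $C_h$ be two monotone curves in $[0,N-k]\times[0,k]$ such that $\lfloor g(j)\rfloor=\lfloor h(j)\rfloor$ for every $j=1,\dots,N-k-1$. Then the links $L_g$ and $L_h$ are isotopic.
   Context: Fix $1\le k<N$. A monotone curve $C_g$ is the graph of a strictly increasing function $g:[0,N-k]\to[0,k]$ with $g(0)=0$, $g(N-k)=k$, and $g(j)\notin\mathbb Z$ for $j=1,\dots,N-k-1$. The link $L_g$ is defined as follows. Map each point $p=(x,g(x))$ of $C_g$ to $(\bar p,\,1-\frac x{N-k})\in T\times[0,1]$, where $\bar p$ is the image of $p$ in the torus $T=\mathbb R^2/\mathbb Z^2$. Then join $((0,0),1)$ to $((0,0),0)$ by a vertical segment. Equivalently, the diagram of $L_g$ on $T$ is the projection of $C_g$. Wherever two points $(x,g(x))$ and $(x',g(x'))$ with $x<x'$ project to the same point, the strand through $(x,g(x))$ is drawn above. $L_g$ is viewed as a link in the thickened torus $T\times[0,1]$, and isotopy is taken there. *)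

theory Defs
  imports "HOL-Analysis.Analysis"
begin

text \<open>The torus T = R^2/Z^2 is modelled as S^1 x S^1 (unit circles in the complex plane)
  via (x,y) |-> (e^{2 pi i x}, e^{2 pi i y}); the thickened torus is T x [0,1].\<close>

definition circ :: "real \<Rightarrow> complex" where
  "circ x = cis (2 * pi * x)"

definition thickened_torus :: "(complex \<times> complex \<times> real) set" where
  "thickened_torus = sphere 0 1 \<times> sphere 0 1 \<times> {0..1}"

definition monotone_curve :: "nat \<Rightarrow> nat \<Rightarrow> (real \<Rightarrow> real) \<Rightarrow> bool" where
  "monotone_curve N k g \<longleftrightarrow>
     continuous_on {0..real (N - k)} g \<and>
     strict_mono_on {0..real (N - k)} g \<and>
     g ` {0..real (N - k)} \<subseteq> {0..real k} \<and>
     g 0 = 0 \<and> g (real (N - k)) = real k \<and>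
     (\<forall>j\<in>{1..<N - k}. g (real j) \<notin> \<int>)"

definition link_L :: "nat \<Rightarrow> nat \<Rightarrow> (real \<Rightarrow> real) \<Rightarrow> (complex \<times> complex \<times> real) set" where
  "link_L N k g =
     (\<lambda>x. (circ x, circ (g x), 1 - x / real (N - k))) ` {0..real (N - k)}
     \<union> (\<lambda>t. (1, 1, t)) ` {0..1}"

definition ambient_isotopic :: "('a::topological_space) set \<Rightarrow> 'a set \<Rightarrow> 'a set \<Rightarrow> bool" where
  "ambient_isotopic M A B \<longleftrightarrow>
     (\<exists>H :: real \<times> 'a \<Rightarrow> 'a.
        continuous_on ({0..1} \<times> M) H \<and> H ` ({0..1} \<times> M) \<subseteq> M \<and>
        (\<forall>t\<in>{0..1}. \<exists>H'. homeomorphism M M (\<lambda>p. H (t, p)) H') \<and>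
        (\<forall>p\<in>M. H (0, p) = p) \<and>
        (\<lambda>p. H (1, p)) ` A = B)"

end

theory Submission
  imports Defs
begin

text \<open>The isotopy fixes the base circle and the height and moves each fibre circle by a Moebius
  shift followed by a rotation. Moebius shifts fixing 1 act simply transitively on the circle
  minus 1, so an interpolated shift carries \<open>circ (g j)\<close> to \<open>circ (h j)\<close> at every inner integer
  \<open>j\<close> and fixes the vertical strand. Lifting, the shifted curve is \<open>circ \<circ> G\<close> with \<open>\<lfloor>G j\<rfloor> = \<lfloor>g j\<rfloor>\<close>,
  which equals \<open>\<lfloor>h j\<rfloor>\<close>, so the remaining angle \<open>h - G\<close> vanishes at all integers. These are the
  parameters at which the curve meets the fibre of the vertical strand, so the rotation by
  \<open>h - G\<close> can be cut off to be trivial on the strand.\<close>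

lemma norm_circ [simp]: "cmod (circ x) = 1"
  by (simp add: circ_def)

lemma circ_add: "circ (a + b) = circ a * circ b"
  by (simp add: circ_def cis_mult distrib_left)

lemma circ_neq_0 [simp]: "circ x \<noteq> 0"
  using norm_circ[of x] by (metis norm_zero zero_neq_one)

lemma circ_0 [simp]: "circ 0 = 1"
  by (simp add: circ_def)

lemma circ_mult_circ_minus: "circ a * circ (- a) = 1"
  by (simp flip: circ_add)

lemma circ_eq_1_iff: "circ x = 1 \<longleftrightarrow> x \<in> \<int>"
proof
  assume c: "circ x = 1"
  have "cos (2 * pi * x) = 1"
    using arg_cong[OF c, of Re] by (simp add: circ_def)
  then obtain n :: int where "2 * pi * x = real_of_int n * 2 * pi"
    using cos_one_2pi_int by metis
  then show "x \<in> \<int>" by simp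
qed (simp add: circ_def)

lemma circ_eq_circ_iff: "circ a = circ b \<longleftrightarrow> a - b \<in> \<int>"
proof -
  have "circ a = circ (a - b) * circ b"
    by (simp flip: circ_add)
  then have "circ a = circ b \<longleftrightarrow> circ (a - b) = 1"
    by auto
  then show ?thesis
    by (simp add: circ_eq_1_iff)
qed

lemma continuous_on_circ [continuous_intros]:
  "continuous_on S f \<Longrightarrow> continuous_on S (\<lambda>x. circ (f x))"
  unfolding circ_def by (intro continuous_intros)

section \<open>Moebius shifts of the unit circle\<close>

text \<open>In the Cayley coordinate, which identifies the unit circle minus 1 with the real line,
  \<open>mobius_shift t\<close> is translation by \<open>t\<close> (lemma \<open>mobius_shift_cayley\<close>); the closed form also
  covers the fixed point 1.\<close>

definition mobius_shift :: "real \<Rightarrow> complex \<Rightarrow> complex" where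
  "mobius_shift t v = (2 * \<i> * v + of_real t * (1 - v)) / (2 * \<i> + of_real t * (1 - v))"

definition cayley :: "complex \<Rightarrow> complex" where
  "cayley v = \<i> * (1 + v) / (1 - v)"

definition cayley_inv :: "complex \<Rightarrow> complex" where
  "cayley_inv w = (\<i> * w + 1) / (\<i> * w - 1)"

lemma mobius_shift_denom_nonzero:
  assumes "cmod v = 1"
  shows "2 * \<i> + of_real t * (1 - v) \<noteq> 0"
proof
  assume h: "2 * \<i> + of_real t * (1 - v) = 0"
  have re: "t * (1 - Re v) = 0" and im: "2 - t * Im v = 0"
    using arg_cong[OF h, of Re] arg_cong[OF h, of Im] by auto
  show False
  proof (cases "t = 0")
    case False
    then have "Re v = 1"
      using re by simp
    moreover have "(Re v)\<^sup>2 + (Im v)\<^sup>2 = 1"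
      using assms by (simp add: cmod_def)
    ultimately show False
      using im by simp
  qed (use im in simp)
qed

lemma norm_mobius_shift:
  assumes "cmod v = 1"
  shows "cmod (mobius_shift t v) = 1"
proof -
  have "(Re v)\<^sup>2 + (Im v)\<^sup>2 = 1"
    using assms by (simp add: cmod_def)
  then have "(cmod (2 * \<i> * v + of_real t * (1 - v)))\<^sup>2 = (cmod (2 * \<i> + of_real t * (1 - v)))\<^sup>2"
    unfolding cmod_power2 by (simp add: power2_eq_square algebra_simps)
  then have "cmod (2 * \<i> * v + of_real t * (1 - v)) = cmod (2 * \<i> + of_real t * (1 - v))"
    by simp
  then show ?thesis
    using mobius_shift_denom_nonzero[OF assms, of t] by (simp add: mobius_shift_def norm_divide)
qed

lemma mobius_shift_0 [simp]: "mobius_shift 0 v = v"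
  by (simp add: mobius_shift_def)

lemma mobius_shift_fixes_1 [simp]: "mobius_shift t 1 = 1"
  by (simp add: mobius_shift_def)

lemma mobius_shift_eq_1_iff:
  assumes "cmod v = 1"
  shows "mobius_shift t v = 1 \<longleftrightarrow> v = 1"
  using mobius_shift_denom_nonzero[OF assms, of t] by (auto simp: mobius_shift_def)

lemma continuous_on_mobius_shift [continuous_intros]:
  assumes "continuous_on S f" "continuous_on S g" "\<And>x. x \<in> S \<Longrightarrow> cmod (g x) = 1"
  shows "continuous_on S (\<lambda>x. mobius_shift (f x) (g x))"
  unfolding mobius_shift_def using assms mobius_shift_denom_nonzero by (intro continuous_intros) auto

lemma cayley_in_Reals:
  assumes "cmod v = 1" "v \<noteq> 1"
  shows "cayley v \<in> \<real>"
proof -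
  have vv: "v * cnj v = 1"
    using assms(1) by (metis complex_norm_square of_real_1 power_one)
  then have v0: "v \<noteq> 0"
    by auto
  have "cnj v = 1 / v"
    using vv v0 by (simp add: field_simps)
  moreover have "cnj v \<noteq> 1"
    using assms(2) by (metis complex_cnj_cnj complex_cnj_one)
  ultimately have "cnj (cayley v) = cayley v"
    using assms(2) v0 by (simp add: cayley_def field_simps)
  then show ?thesis
    by (metis Reals_cnj_iff)
qed

lemma cayley_inv_cayley:
  assumes "v \<noteq> 1"
  shows "cayley_inv (cayley v) = v"
  using assms by (simp add: cayley_def cayley_inv_def field_simps)

lemma cayley_cayley_inv:
  assumes "w \<in> \<real>"
  shows "cayley (cayley_inv w) = w"
proof -
  have "\<i> * w - 1 \<noteq> 0"
    using assms by (auto elim!: Reals_cases simp: complex_eq_iff)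
  then show ?thesis
    by (simp add: cayley_def cayley_inv_def field_simps)
qed

lemma mobius_shift_cayley:
  assumes "cmod v = 1" "v \<noteq> 1"
  shows "mobius_shift t v = cayley_inv (cayley v + of_real t)"
proof -
  have v1: "1 - v \<noteq> 0"
    using assms by simp
  define q where "q = - (1 + v) + \<i> * of_real t * (1 - v)"
  have q: "\<i> * (cayley v + of_real t) = q / (1 - v)"
    unfolding cayley_def q_def using v1 by (simp add: field_simps)
  have "cayley_inv (cayley v + of_real t) = (q + (1 - v)) / (q - (1 - v))"
    unfolding cayley_inv_def q using v1 by (simp add: divide_simps)
  also have "\<dots> = (- 2 * v + \<i> * of_real t * (1 - v)) / (- 2 + \<i> * of_real t * (1 - v))"
    unfolding q_def by (simp add: algebra_simps)
  also have "\<dots> = (-\<i> * (- 2 * v + \<i> * of_real t * (1 - v))) / (-\<i> * (- 2 + \<i> * of_real t * (1 - v)))"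
    by (rule mult_divide_mult_cancel_left[symmetric]) simp
  also have "\<dots> = mobius_shift t v"
    unfolding mobius_shift_def by (simp add: algebra_simps)
  finally show ?thesis ..
qed

lemma mobius_shift_inverse:
  assumes "cmod v = 1"
  shows "mobius_shift (- t) (mobius_shift t v) = v"
proof (cases "v = 1")
  case False
  let ?w = "mobius_shift t v"
  have "?w \<noteq> 1" "cmod ?w = 1"
    using False assms by (simp_all add: mobius_shift_eq_1_iff norm_mobius_shift)
  moreover have "cayley v + of_real t \<in> \<real>"
    using cayley_in_Reals[OF assms False] by simp
  ultimately show ?thesis
    using assms False by (simp add: mobius_shift_cayley cayley_cayley_inv cayley_inv_cayley)
qed simp

lemma mobius_shift_transitive:
  assumes "cmod a = 1" "a \<noteq> 1" "cmod b = 1" "b \<noteq> 1"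
  obtains t where "mobius_shift t a = b"
proof -
  obtain t where t: "cayley b - cayley a = of_real t"
    using cayley_in_Reals[OF assms(1,2)] cayley_in_Reals[OF assms(3,4)] by (metis Reals_cases Reals_diff)
  have "cayley a + of_real t = cayley b"
    by (simp flip: t)
  then have "mobius_shift t a = b"
    using assms by (simp add: mobius_shift_cayley cayley_inv_cayley)
  then show ?thesis ..
qed

section \<open>Lifting through the circle map\<close>

lemma integer_valued_continuous_constant:
  fixes f :: "'a::topological_space \<Rightarrow> real"
  assumes "connected S" "continuous_on S f" "\<And>x. x \<in> S \<Longrightarrow> f x \<in> \<int>" "a \<in> S" "b \<in> S"
  shows "f a = f b"
proof -
  have "f constant_on S"
  proof (rule continuous_discrete_range_constant[OF assms(1,2)])
    fix x assume x: "x \<in> S"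
    show "\<exists>e>0. \<forall>y. y \<in> S \<and> f y \<noteq> f x \<longrightarrow> e \<le> norm (f y - f x)"
    proof (intro exI[of _ 1] conjI allI impI)
      fix y assume "y \<in> S \<and> f y \<noteq> f x"
      then have "f y - f x \<in> \<int>" "f y - f x \<noteq> 0"
        using assms(3) x by auto
      then show "1 \<le> norm (f y - f x)"
        by (metis Ints_nonzero_abs_ge1 real_norm_def)
    qed simp
  qed
  then show ?thesis
    using assms(4,5) by (auto simp: constant_on_def)
qed

lemma floor_constant_if_never_integer:
  fixes f :: "'a::topological_space \<Rightarrow> real"
  assumes "connected S" "continuous_on S f" "\<And>x. x \<in> S \<Longrightarrow> f x \<notin> \<int>" "a \<in> S" "b \<in> S"
  shows "\<lfloor>f a\<rfloor> = \<lfloor>f b\<rfloor>"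
proof (rule ccontr)
  assume "\<lfloor>f a\<rfloor> \<noteq> \<lfloor>f b\<rfloor>"
  then consider "\<lfloor>f a\<rfloor> < \<lfloor>f b\<rfloor>" | "\<lfloor>f b\<rfloor> < \<lfloor>f a\<rfloor>"
    by linarith
  then obtain c d where cd: "c \<in> S" "d \<in> S" "\<lfloor>f c\<rfloor> < \<lfloor>f d\<rfloor>"
    using assms(4,5) by metis
  have "f c < of_int \<lfloor>f d\<rfloor>" "of_int \<lfloor>f d\<rfloor> \<le> f d"
    using cd(3) by linarith+
  moreover have "connected (f ` S)"
    using assms(2,1) by (rule connected_continuous_image)
  ultimately have "of_int \<lfloor>f d\<rfloor> \<in> f ` S"
    using cd(1,2) unfolding connected_iff_interval by (meson image_eqI less_imp_le)
  then show False
    using assms(3) by (metis Ints_of_int imageE)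
qed

lemma eq_if_diff_in_Ints_floor_eq:
  fixes a b :: real
  assumes "a - b \<in> \<int>" "\<lfloor>a\<rfloor> = \<lfloor>b\<rfloor>"
  shows "a = b"
proof -
  obtain m :: int where m: "a - b = of_int m"
    using assms(1) by (auto elim: Ints_cases)
  have "\<bar>a - b\<bar> < 1"
    using assms(2) by linarith
  then have "m = 0"
    using m by simp
  with m show ?thesis
    by simp
qed

lemma continuous_circ_lift:
  fixes f :: "'a::real_normed_vector \<Rightarrow> complex"
  assumes "contractible S" "continuous_on S f" "\<And>p. p \<in> S \<Longrightarrow> cmod (f p) = 1"
  obtains \<Lambda> where "continuous_on S \<Lambda>" "\<And>p. p \<in> S \<Longrightarrow> circ (\<Lambda> p) = f p"
proof -
  obtain l where l: "continuous_on S l" "\<And>p. p \<in> S \<Longrightarrow> f p = exp (l p)"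
    using continuous_logarithm_on_contractible[OF assms(2,1)] assms(3) by (metis norm_zero zero_neq_one)
  show ?thesis
  proof
    show "continuous_on S (\<lambda>p. Im (l p) / (2 * pi))"
      by (intro continuous_intros l) simp
    fix p assume p: "p \<in> S"
    have "exp (Re (l p)) = 1"
      using assms(3)[OF p] l(2)[OF p] by (metis norm_exp_eq_Re)
    then show "circ (Im (l p) / (2 * pi)) = f p"
      using l(2)[OF p] by (simp add: circ_def exp_eq_polar)
  qed
qed

lemma lift_of_mobius_shift_path:
  assumes "continuous_on {0..1} F" "\<And>s. s \<in> {0..1} \<Longrightarrow> circ (F s) = mobius_shift (s * t) w"
    and "cmod w = 1"
  shows "w = 1 \<Longrightarrow> F 1 = F 0" and "w \<noteq> 1 \<Longrightarrow> \<lfloor>F 1\<rfloor> = \<lfloor>F 0\<rfloor>"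
proof -
  have circF: "F s \<in> \<int> \<longleftrightarrow> mobius_shift (s * t) w = 1" if "s \<in> {0..1}" for s
    using assms(2)[OF that] by (simp flip: circ_eq_1_iff)
  show "F 1 = F 0" if "w = 1"
    using circF that by (intro integer_valued_continuous_constant[OF connected_Icc assms(1)]) auto
  show "\<lfloor>F 1\<rfloor> = \<lfloor>F 0\<rfloor>" if "w \<noteq> 1"
    using circF that assms(3)
    by (intro floor_constant_if_never_integer[OF connected_Icc assms(1)]) (auto simp: mobius_shift_eq_1_iff)
qed

lemma lift_mobius_shift:
  fixes X :: "'a::euclidean_space set" and g \<tau> :: "'a \<Rightarrow> real"
  assumes "contractible X" "continuous_on X g" "continuous_on X \<tau>"
  obtains G where "continuous_on X G"
    "\<And>x. x \<in> X \<Longrightarrow> circ (G x) = mobius_shift (\<tau> x) (circ (g x))"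
    "\<And>x. x \<in> X \<Longrightarrow> g x \<in> \<int> \<Longrightarrow> G x = g x"
    "\<And>x. x \<in> X \<Longrightarrow> g x \<notin> \<int> \<Longrightarrow> \<lfloor>G x\<rfloor> = \<lfloor>g x\<rfloor>"
proof -
  define S where "S = {0..1::real} \<times> X"
  define f where "f = (\<lambda>p. mobius_shift (fst p * \<tau> (snd p)) (circ (g (snd p))))"
  have "contractible S"
    unfolding S_def using assms(1) by (intro contractible_Times) (auto intro: convex_imp_contractible)
  moreover have "continuous_on S f"
    unfolding f_def S_def
    by (intro continuous_intros continuous_on_compose2[OF assms(2)] continuous_on_compose2[OF assms(3)])
      auto
  moreover have "cmod (f p) = 1" for p
    unfolding f_def by (simp add: norm_mobius_shift)
  ultimately obtain \<Lambda> where \<Lambda>: "continuous_on S \<Lambda>" "\<And>p. p \<in> S \<Longrightarrow> circ (\<Lambda> p) = f p"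
    using continuous_circ_lift by blast
  \<comment> \<open>\<open>F x\<close> is the lift of the path \<open>s \<mapsto> f (s, x)\<close> starting at \<open>g x\<close>.\<close>
  define F where "F = (\<lambda>x s. \<Lambda> (s, x) - \<Lambda> (0, x) + g x)"
  have contF: "continuous_on {0..1} (F x)" if "x \<in> X" for x
    unfolding F_def using that
    by (intro continuous_intros continuous_on_compose2[OF \<Lambda>(1)]) (auto simp: S_def)
  have circF: "circ (F x s) = mobius_shift (s * \<tau> x) (circ (g x))" if "x \<in> X" "s \<in> {0..1}" for x s
  proof -
    have "circ (F x s) * circ (\<Lambda> (0, x)) = circ (\<Lambda> (s, x)) * circ (g x)"
      unfolding F_def by (simp flip: circ_add)
    moreover have "circ (\<Lambda> (0, x)) = circ (g x)" "circ (\<Lambda> (s, x)) = f (s, x)"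
      using \<Lambda>(2) that by (auto simp: S_def f_def)
    ultimately have "circ (F x s) * circ (g x) = f (s, x) * circ (g x)"
      by simp
    then show ?thesis
      by (simp add: f_def)
  qed
  show ?thesis
  proof
    show "continuous_on X (\<lambda>x. F x 1)"
      unfolding F_def
      by (intro continuous_intros assms(2) continuous_on_compose2[OF \<Lambda>(1)]) (auto simp: S_def)
    fix x assume x: "x \<in> X"
    show "circ (F x 1) = mobius_shift (\<tau> x) (circ (g x))"
      using circF[OF x] by simp
    note F_path = lift_of_mobius_shift_path[OF contF[OF x] circF[OF x] norm_circ]
    show "F x 1 = g x" if "g x \<in> \<int>"
      using F_path(1) that by (simp add: F_def circ_eq_1_iff)
    show "\<lfloor>F x 1\<rfloor> = \<lfloor>g x\<rfloor>" if "g x \<notin> \<int>"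
      using F_path(2) that by (simp add: F_def circ_eq_1_iff)
  qed
qed

section \<open>Fibrewise isotopies of the thickened torus\<close>

lemma mem_thickened_torus:
  "w \<in> thickened_torus \<longleftrightarrow> cmod (fst w) = 1 \<and> cmod (fst (snd w)) = 1 \<and> snd (snd w) \<in> {0..1}"
  by (cases w) (auto simp: thickened_torus_def)

definition twist :: "(complex \<times> real \<Rightarrow> real) \<Rightarrow> (complex \<times> real \<Rightarrow> real)
    \<Rightarrow> complex \<times> complex \<times> real \<Rightarrow> complex \<times> complex \<times> real" where
  "twist a b w = (fst w,
     mobius_shift (a (fst w, snd (snd w))) (fst (snd w)) * circ (b (fst w, snd (snd w))), snd (snd w))"

lemma twist_apply [simp]: "twist a b (u, v, z) = (u, mobius_shift (a (u, z)) v * circ (b (u, z)), z)"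
  by (simp add: twist_def)

lemma continuous_on_fibre_parameter:
  assumes "continuous_on (sphere 0 1 \<times> {0..1}) a"
    and "continuous_on S f" "\<And>x. x \<in> S \<Longrightarrow> f x \<in> thickened_torus"
  shows "continuous_on S (\<lambda>x. a (fst (f x), snd (snd (f x))))"
proof (rule continuous_on_compose2[OF assms(1)])
  show "continuous_on S (\<lambda>x. (fst (f x), snd (snd (f x))))"
    by (intro continuous_intros assms(2))
  show "(\<lambda>x. (fst (f x), snd (snd (f x)))) ` S \<subseteq> sphere 0 1 \<times> {0..1}"
    using assms(3) by (auto simp: mem_thickened_torus)
qed

lemma homeomorphism_twist:
  assumes a: "continuous_on (sphere 0 1 \<times> {0..1}) a" and b: "continuous_on (sphere 0 1 \<times> {0..1}) b"
  shows "\<exists>h. homeomorphism thickened_torus thickened_torus (twist a b) h"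
proof
  let ?M = thickened_torus
  define h where "h w = (fst w,
     mobius_shift (- a (fst w, snd (snd w))) (fst (snd w) * circ (- b (fst w, snd (snd w)))), snd (snd w))"
    for w
  have ca: "continuous_on ?M (\<lambda>w. a (fst w, snd (snd w)))"
    and cb: "continuous_on ?M (\<lambda>w. b (fst w, snd (snd w)))"
    by (rule continuous_on_fibre_parameter[OF _ continuous_on_id]; use a b in simp)+
  show "homeomorphism ?M ?M (twist a b) h"
  proof (rule homeomorphismI)
    show "continuous_on ?M (twist a b)" "continuous_on ?M h"
      unfolding twist_def h_def
      by (intro continuous_intros ca cb; simp add: mem_thickened_torus norm_mult)+
    show "twist a b ` ?M \<subseteq> ?M" "h ` ?M \<subseteq> ?M"
      by (auto simp: mem_thickened_torus twist_def h_def norm_mult norm_mobius_shift)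
    show "h (twist a b w) = w" if "w \<in> ?M" for w
      using that mobius_shift_inverse circ_mult_circ_minus
      by (auto simp: mem_thickened_torus twist_def h_def mult.assoc)
    show "twist a b (h w) = w" if "w \<in> ?M" for w
    proof -
      obtain u v z where w: "w = (u, v, z)"
        by (cases w)
      have "cmod (v * circ (- b (u, z))) = 1"
        using that by (simp add: mem_thickened_torus norm_mult w)
      then show ?thesis
        using mobius_shift_inverse[of _ "- a (u, z)"] circ_mult_circ_minus[of "- b (u, z)"]
        by (simp add: w h_def mult.assoc)
    qed
  qed
qed

lemma ambient_isotopic_twist:
  assumes a: "continuous_on (sphere 0 1 \<times> {0..1}) a" and b: "continuous_on (sphere 0 1 \<times> {0..1}) b"
  shows "ambient_isotopic thickened_torus A (twist a b ` A)"
proof -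
  let ?M = thickened_torus
  define H where "H p = twist (\<lambda>q. fst p * a q) (\<lambda>q. fst p * b q) (snd p)" for p
  have ca: "continuous_on ({0..1} \<times> ?M) (\<lambda>p. a (fst (snd p), snd (snd (snd p))))"
    and cb: "continuous_on ({0..1} \<times> ?M) (\<lambda>p. b (fst (snd p), snd (snd (snd p))))"
    by (rule continuous_on_fibre_parameter[OF _ continuous_on_snd]; use a b in auto)+
  show ?thesis
    unfolding ambient_isotopic_def
  proof (intro exI[of _ H] conjI ballI)
    show "continuous_on ({0..1} \<times> ?M) H"
      unfolding H_def twist_def by (intro continuous_intros ca cb) (auto simp: mem_thickened_torus)
    show "H ` ({0..1} \<times> ?M) \<subseteq> ?M"
      by (auto simp: H_def mem_thickened_torus twist_def norm_mult norm_mobius_shift)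
    show "\<exists>h. homeomorphism ?M ?M (\<lambda>w. H (t, w)) h" for t
      using homeomorphism_twist[of "\<lambda>q. t * a q" "\<lambda>q. t * b q"] a b
      by (simp add: H_def continuous_on_mult_left)
    show "H (0, w) = w" for w
      by (simp add: H_def twist_def)
    show "(\<lambda>w. H (1, w)) ` A = twist a b ` A"
      by (simp add: H_def)
  qed
qed

section \<open>Transporting one monotone curve onto another\<close>

text \<open>Where \<open>circ x = 1\<close> the quotient has denominator 0, so \<open>cutoff u x = 1\<close> for all \<open>u\<close>; the cutoff
  is only used multiplied by a factor vanishing at such \<open>x\<close>.\<close>

definition cutoff :: "complex \<Rightarrow> real \<Rightarrow> real" where
  "cutoff u x = max 0 (1 - cmod (u - circ x) / cmod (1 - circ x))"

lemma cutoff_bounds: "0 \<le> cutoff u x" "cutoff u x \<le> 1"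
  unfolding cutoff_def by auto

lemma cutoff_circ [simp]: "cutoff (circ x) x = 1"
  by (simp add: cutoff_def)

lemma cutoff_1: "circ x \<noteq> 1 \<Longrightarrow> cutoff 1 x = 0"
  by (simp add: cutoff_def)

lemma continuous_on_times_cutoff:
  fixes r :: "real \<Rightarrow> real"
  assumes r: "continuous_on X r" and r0: "\<And>x. x \<in> X \<Longrightarrow> circ x = 1 \<Longrightarrow> r x = 0"
  shows "continuous_on (UNIV \<times> X) (\<lambda>p. r (snd p) * cutoff (fst p) (snd p))"
  unfolding continuous_on_eq_continuous_within
proof
  let ?S = "UNIV \<times> X :: (complex \<times> real) set"
  fix p assume p: "p \<in> ?S"
  have "continuous_on ?S (\<lambda>p. r (snd p))"
    by (rule continuous_on_compose2[OF r continuous_on_snd]) auto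
  then have rt: "((\<lambda>p. r (snd p)) \<longlongrightarrow> r (snd p)) (at p within ?S)"
    using p unfolding continuous_on_eq_continuous_within continuous_within by blast
  show "continuous (at p within ?S) (\<lambda>p. r (snd p) * cutoff (fst p) (snd p))"
  proof (cases "circ (snd p) = 1")
    case True
    then have rp: "r (snd p) = 0"
      using r0 p by auto
    have "((\<lambda>p. r (snd p) * cutoff (fst p) (snd p)) \<longlongrightarrow> 0) (at p within ?S)"
    proof (rule Lim_null_comparison)
      show "\<forall>\<^sub>F q in at p within ?S. norm (r (snd q) * cutoff (fst q) (snd q)) \<le> \<bar>r (snd q)\<bar>"
        using cutoff_bounds by (auto intro!: always_eventually simp: abs_mult mult_left_le)
      show "((\<lambda>q. \<bar>r (snd q)\<bar>) \<longlongrightarrow> 0) (at p within ?S)"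
        using tendsto_rabs_zero[OF rt[unfolded rp]] .
    qed
    then show ?thesis
      unfolding continuous_within using rp by simp
  next
    case False
    then have "cmod (1 - circ (snd p)) \<noteq> 0"
      by simp
    moreover have "continuous_on UNIV (\<lambda>q::complex \<times> real. circ (snd q))"
      by (intro continuous_intros)
    then have "((\<lambda>q. circ (snd q)) \<longlongrightarrow> circ (snd p)) (at p within ?S)"
      by (metis UNIV_I continuous_on_def tendsto_within_subset subset_UNIV)
    ultimately show ?thesis
      unfolding continuous_within cutoff_def by (intro tendsto_intros rt)
  qed
qed

definition pl_interpolation :: "(nat \<Rightarrow> real) \<Rightarrow> nat \<Rightarrow> real \<Rightarrow> real" where
  "pl_interpolation T n x = (\<Sum>j\<le>n. T j * max 0 (1 - \<bar>x - real j\<bar>))"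

lemma pl_interpolation_nat:
  assumes "m \<le> n"
  shows "pl_interpolation T n (real m) = T m"
proof -
  have "max 0 (1 - \<bar>real m - real j\<bar>) = (if j = m then 1 else 0)" for j :: nat
  proof (cases "j = m")
    case False
    then have "\<bar>real m - real j\<bar> \<ge> 1"
      by linarith
    then show ?thesis
      using False by simp
  qed simp
  then show ?thesis
    using assms by (simp add: pl_interpolation_def if_distrib[of "\<lambda>x. T _ * x"] cong: if_cong)
qed

lemma continuous_on_pl_interpolation [continuous_intros]:
  "continuous_on S f \<Longrightarrow> continuous_on S (\<lambda>x. pl_interpolation T n (f x))"
  unfolding pl_interpolation_def by (intro continuous_intros)

lemma interpolating_mobius_shift:
  assumes "\<And>j. j \<in> J \<Longrightarrow> cmod (a j) = 1 \<and> a j \<noteq> 1 \<and> cmod (b j) = 1 \<and> b j \<noteq> 1"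
  obtains \<tau> where "continuous_on UNIV \<tau>" "\<And>j. j \<in> J \<Longrightarrow> j \<le> n \<Longrightarrow> mobius_shift (\<tau> (real j)) (a j) = b j"
proof -
  have "\<exists>t. mobius_shift t (a j) = b j" if "j \<in> J" for j
    by (rule mobius_shift_transitive[of "a j" "b j"]) (use assms[OF that] in auto)
  then obtain T where "\<And>j. j \<in> J \<Longrightarrow> mobius_shift (T j) (a j) = b j"
    by metis
  moreover have "continuous_on UNIV (pl_interpolation T n)"
    by (intro continuous_intros)
  ultimately show ?thesis
    using that by (simp add: pl_interpolation_nat)
qed

lemma monotone_curve_transport:
  assumes g: "monotone_curve N k g" and h: "monotone_curve N k h"
    and floors: "\<forall>j\<in>{1..<N - k}. \<lfloor>g (real j)\<rfloor> = \<lfloor>h (real j)\<rfloor>"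
  obtains \<tau> r where "continuous_on {0..real (N - k)} \<tau>" "continuous_on {0..real (N - k)} r"
    "\<And>x. x \<in> {0..real (N - k)} \<Longrightarrow> circ x = 1 \<Longrightarrow> r x = 0"
    "\<And>x. x \<in> {0..real (N - k)} \<Longrightarrow> mobius_shift (\<tau> x) (circ (g x)) * circ (r x) = circ (h x)"
proof -
  define n where "n = N - k"
  have cg: "continuous_on {0..real n} g" and ch: "continuous_on {0..real n} h"
    and ends: "g 0 = h 0" "g (real n) = h (real n)" "g 0 \<in> \<int>" "g (real n) \<in> \<int>"
    using g h by (simp_all add: monotone_curve_def n_def)
  have inner: "g (real j) \<notin> \<int>" "h (real j) \<notin> \<int>" "\<lfloor>g (real j)\<rfloor> = \<lfloor>h (real j)\<rfloor>"
    if "j \<in> {1..<n}" for j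
    using g h floors that by (auto simp: monotone_curve_def n_def)
  obtain \<tau> where c\<tau>: "continuous_on UNIV \<tau>"
    and \<tau>: "\<And>j. j \<in> {1..<n} \<Longrightarrow> mobius_shift (\<tau> (real j)) (circ (g (real j))) = circ (h (real j))"
    using interpolating_mobius_shift[of "{1..<n}" "\<lambda>j. circ (g (real j))" "\<lambda>j. circ (h (real j))" n]
      inner by (auto simp: circ_eq_1_iff)
  obtain G where cG: "continuous_on {0..real n} G"
    and G: "\<And>x. x \<in> {0..real n} \<Longrightarrow> circ (G x) = mobius_shift (\<tau> x) (circ (g x))"
    and GZ: "\<And>x. x \<in> {0..real n} \<Longrightarrow> g x \<in> \<int> \<Longrightarrow> G x = g x"
    and GF: "\<And>x. x \<in> {0..real n} \<Longrightarrow> g x \<notin> \<int> \<Longrightarrow> \<lfloor>G x\<rfloor> = \<lfloor>g x\<rfloor>"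
    using lift_mobius_shift[OF convex_imp_contractible cg continuous_on_subset[OF c\<tau>]] by auto
  define r where "r x = h x - G x" for x
  have r_nat: "r (real j) = 0" if "j \<le> n" for j
  proof (cases "j \<in> {1..<n}")
    case True
    have "G (real j) - h (real j) \<in> \<int>"
      using G \<tau> True by (simp flip: circ_eq_circ_iff)
    moreover have "\<lfloor>G (real j)\<rfloor> = \<lfloor>h (real j)\<rfloor>"
      using GF inner True by simp
    ultimately have "G (real j) = h (real j)"
      by (rule eq_if_diff_in_Ints_floor_eq)
    then show ?thesis
      by (simp add: r_def)
  next
    case False
    with that have "j = 0 \<or> j = n"
      by auto
    then show ?thesis
      using GZ ends by (auto simp: r_def)
  qed
  show ?thesis
  proof (rule that[of \<tau> r, folded n_def])
    show "continuous_on {0..real n} \<tau>" "continuous_on {0..real n} r"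
      unfolding r_def by (intro continuous_on_subset[OF c\<tau>] cG ch continuous_intros subset_UNIV)+
    show "r x = 0" if x: "x \<in> {0..real n}" and "circ x = 1" for x
    proof -
      obtain m :: int where "x = of_int m"
        using \<open>circ x = 1\<close> by (metis Ints_cases circ_eq_1_iff)
      with x have "x = real (nat m)" "nat m \<le> n"
        by auto
      then show ?thesis
        using r_nat by simp
    qed
    show "mobius_shift (\<tau> x) (circ (g x)) * circ (r x) = circ (h x)" if "x \<in> {0..real n}" for x
      using G[OF that] circ_add[of "h x - G x" "G x"] by (simp add: r_def mult.commute)
  qed
qed

lemma link_L_isotopic_if_transported:
  assumes "k < N"
    and c\<tau>: "continuous_on {0..real (N - k)} \<tau>" and cr: "continuous_on {0..real (N - k)} r"
    and r0: "\<And>x. x \<in> {0..real (N - k)} \<Longrightarrow> circ x = 1 \<Longrightarrow> r x = 0"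
    and gh: "\<And>x. x \<in> {0..real (N - k)} \<Longrightarrow> mobius_shift (\<tau> x) (circ (g x)) * circ (r x) = circ (h x)"
  shows "ambient_isotopic thickened_torus (link_L N k g) (link_L N k h)"
proof -
  define L where "L = real (N - k)"
  have "L > 0"
    using \<open>k < N\<close> by (simp add: L_def)
  \<comment> \<open>Height \<open>z\<close> in the thickened torus corresponds to the curve parameter \<open>L * (1 - z)\<close>.\<close>
  define a where "a q = \<tau> (L * (1 - snd q))" for q :: "complex \<times> real"
  define b where "b q = r (L * (1 - snd q)) * cutoff (fst q) (L * (1 - snd q))" for q :: "complex \<times> real"
  have param: "(\<lambda>q. (fst q, L * (1 - snd q))) ` (sphere 0 1 \<times> {0..1}) \<subseteq> UNIV \<times> {0..L}"
    using \<open>L > 0\<close> by (auto simp: mult_le_cancel_left1)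
  have ca: "continuous_on (sphere 0 1 \<times> {0..1}) a"
    unfolding a_def using param
    by (intro continuous_on_compose2[OF c\<tau>[folded L_def]] continuous_intros) auto
  have "continuous_on (UNIV \<times> {0..L}) (\<lambda>p. r (snd p) * cutoff (fst p) (snd p))"
    using continuous_on_times_cutoff[OF cr] r0 unfolding L_def by blast
  then have "continuous_on (sphere 0 1 \<times> {0..1})
      (\<lambda>q. (\<lambda>p. r (snd p) * cutoff (fst p) (snd p)) (fst q, L * (1 - snd q)))"
    by (rule continuous_on_compose2[OF _ _ param]) (intro continuous_intros)
  then have cb: "continuous_on (sphere 0 1 \<times> {0..1}) b"
    by (simp add: b_def)
  have "twist a b ` link_L N k g = link_L N k h"
  proof -
    have "twist a b (1, 1, z) = (1, 1, z)" if "z \<in> {0..1}" for z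
      using r0[of "L * (1 - z)"] cutoff_1[of "L * (1 - z)"] that \<open>L > 0\<close>
      by (cases "circ (L * (1 - z)) = 1") (auto simp: b_def L_def mult_le_cancel_left1)
    moreover have "twist a b (circ x, circ (g x), 1 - x / L) = (circ x, circ (h x), 1 - x / L)"
      if "x \<in> {0..L}" for x
      using gh[of x] that \<open>L > 0\<close> by (simp add: a_def b_def L_def)
    ultimately show ?thesis
      unfolding link_L_def image_Un image_image L_def[symmetric]
      by (metis (no_types, lifting) image_cong)
  qed
  then show ?thesis
    using ambient_isotopic_twist[OF ca cb] by metis
qed

theorem corollary4p1:
  fixes N k :: nat and g h :: "real \<Rightarrow> real"
  assumes "1 \<le> k" and "k < N"
    and "monotone_curve N k g" and "monotone_curve N k h"
    and "\<forall>j\<in>{1..<N - k}. \<lfloor>g (real j)\<rfloor> = \<lfloor>h (real j)\<rfloor>"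
  shows "ambient_isotopic thickened_torus (link_L N k g) (link_L N k h)"
proof -
  obtain \<tau> r where "continuous_on {0..real (N - k)} \<tau>" "continuous_on {0..real (N - k)} r"
    "\<And>x. x \<in> {0..real (N - k)} \<Longrightarrow> circ x = 1 \<Longrightarrow> r x = 0"
    "\<And>x. x \<in> {0..real (N - k)} \<Longrightarrow> mobius_shift (\<tau> x) (circ (g x)) * circ (r x) = circ (h x)"
    using monotone_curve_transport[OF assms(3-5)] by blast
  then show ?thesis
    using link_L_isotopic_if_transported[OF assms(2)] by blast
qed

end
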